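(* Let $d\ge2$, $x\in[-1,1]$, and let $\rho^{AC}$ be the $d\otimes d^2$ state defined in the context. Then its fully entangled fraction is $$\mathcal{F}(\rho^{AC})=\frac14\Big((d+1)\sqrt{\lambda_+}+(d-1)\sqrt{\lambda_-}\Big)^2=\frac{1}{2d}\Big(d+x+\sqrt{(d^2-1)(1-x^2)}\Big).$$
   Context: Let $\mathcal{H}^A=\mathbb{C}^d$ with orthonormal basis $\{|1\rangle,\dots,|d\rangle\}$ and let $\mathcal{H}^C=\mathbb{C}^{d^2}$ with orthonormal basis $\{|\mu^{(+)}_{kl}\rangle\}_{1\le k\le l\le d}\cup\{|\mu^{(-)}_{kl}\rangle\}_{1\le k<l\le d}$. For $x\in[-1,1]$ put $\lambda_\pm=\frac{1\pm x}{d(d\pm1)}$, and let $\alpha,\theta\in[0,\pi/2]$ be defined by $\cos\alpha=\sqrt{d\lambda_+}$ and $\cos\theta=\sqrt{\lambda_+/(\lambda_++\lambda_-)}$. For $r=1,\dots,d$ let $$|\Psi_r\rangle=\cos\alpha\,|r\rangle|\mu^{(+)}_{rr}\rangle+\frac{\sin\alpha}{\sqrt{d-1}}\sum_{k=1}^{r-1}|k\rangle\big(\cos\theta|\mu^{(+)}_{kr}\rangle+\sin\theta|\mu^{(-)}_{kr}\rangle\big)+\frac{\sin\alpha}{\sqrt{d-1}}\sum_{k=r+1}^{d}|k\rangle\big(\cos\theta|\mu^{(+)}_{rk}\rangle-\sin\theta|\mu^{(-)}_{rk}\rangle\big),$$ and $\rho^{AC}=\frac1d\sum_{r=1}^d|\Psi_r\rangle\langle\Psi_r|$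 (the $B$-complement of the $d\otimes d$ Werner state $\rho_{\mathrm w}^{AB}=\frac{d-x}{d^3-d}\mathbb{I}+\frac{dx-1}{d^3-d}F$, $F$ the swap). Fully entangled fraction: for a state $\rho$ on $\mathbb{C}^d\otimes\mathbb{C}^{d^2}$, fix an orthonormal basis $\{|e_m\rangle\}_{m=1}^{d^2}$ of the second factor and set $|\psi^{\max}_i\rangle=\frac1{\sqrt d}\sum_{j=1}^d|j\rangle\otimes|e_{j+(i-1)d}\rangle$, $i=1,\dots,d$; then $\mathcal{F}(\rho)=\max_{V}\sum_{i=1}^{d}\langle\psi^{\max}_i|(\mathbb{I}\otimes V)\rho(\mathbb{I}\otimes V^\dagger)|\psi^{\max}_i\rangle$, the maximum over all unitaries $V$ on the second factor. *)

theory Defs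
  imports Complex_Main
begin

text \<open>Vectors are functions nat => complex (only indices below the dimension matter),
  matrices are functions nat => nat => complex. All indices are 0-based.
  The space C^d (x) C^(d^2) is identified with C^(d^3) via (j,m) |-> j*d^2 + m.\<close>

definition ket :: "nat \<Rightarrow> nat \<Rightarrow> complex" where
  "ket i = (\<lambda>j. if j = i then 1 else 0)"

definition tens :: "nat \<Rightarrow> (nat \<Rightarrow> complex) \<Rightarrow> (nat \<Rightarrow> complex) \<Rightarrow> nat \<Rightarrow> complex" where
  "tens D u v = (\<lambda>n. u (n div D) * v (n mod D))"

text \<open>Orthonormal basis of C^(d^2): mu^(+)_{kl} (k \<le> l) is the standard basis vector
  with index k*d+l, and mu^(-)_{kl} (k < l) the one with index l*d+k.\<close>
definition mup :: "nat \<Rightarrow> nat \<Rightarrow> nat \<Rightarrow> nat \<Rightarrow> complex" where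
  "mup d k l = ket (k * d + l)"
definition mum :: "nat \<Rightarrow> nat \<Rightarrow> nat \<Rightarrow> nat \<Rightarrow> complex" where
  "mum d k l = ket (l * d + k)"

definition lam_p :: "nat \<Rightarrow> real \<Rightarrow> real" where
  "lam_p d x = (1 + x) / (real d * (real d + 1))"
definition lam_m :: "nat \<Rightarrow> real \<Rightarrow> real" where
  "lam_m d x = (1 - x) / (real d * (real d - 1))"

definition alpha :: "nat \<Rightarrow> real \<Rightarrow> real" where
  "alpha d x = arccos (sqrt (real d * lam_p d x))"
definition theta :: "nat \<Rightarrow> real \<Rightarrow> real" where
  "theta d x = arccos (sqrt (lam_p d x / (lam_p d x + lam_m d x)))"

definition Psi :: "nat \<Rightarrow> real \<Rightarrow> nat \<Rightarrow> nat \<Rightarrow> complex" where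
  "Psi d x r =
    (let D = d^2; ca = complex_of_real (cos (alpha d x));
         s = complex_of_real (sin (alpha d x) / sqrt (real d - 1));
         ct = complex_of_real (cos (theta d x)); st = complex_of_real (sin (theta d x))
     in (\<lambda>n. ca * tens D (ket r) (mup d r r) n
            + s * (\<Sum>k\<in>{..<r}. tens D (ket k) (\<lambda>m. ct * mup d k r m + st * mum d k r m) n)
            + s * (\<Sum>k\<in>{r<..<d}. tens D (ket k) (\<lambda>m. ct * mup d r k m - st * mum d r k m) n)))"

definition rhoAC :: "nat \<Rightarrow> real \<Rightarrow> nat \<Rightarrow> nat \<Rightarrow> complex" where
  "rhoAC d x = (\<lambda>a b. (1 / of_nat d) * (\<Sum>r<d. Psi d x r a * cnj (Psi d x r b)))"

definition unitary_on :: "nat \<Rightarrow> (nat \<Rightarrow> nat \<Rightarrow> complex) \<Rightarrow> bool" where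
  "unitary_on D V \<longleftrightarrow>
     (\<forall>a<D. \<forall>b<D. (\<Sum>c<D. V a c * cnj (V b c)) = (if a = b then 1 else 0))"

definition idtens :: "nat \<Rightarrow> (nat \<Rightarrow> nat \<Rightarrow> complex) \<Rightarrow> nat \<Rightarrow> nat \<Rightarrow> complex" where
  "idtens D V = (\<lambda>a b. if a div D = b div D then V (a mod D) (b mod D) else 0)"

definition mmul :: "nat \<Rightarrow> (nat \<Rightarrow> nat \<Rightarrow> complex) \<Rightarrow> (nat \<Rightarrow> nat \<Rightarrow> complex) \<Rightarrow> nat \<Rightarrow> nat \<Rightarrow> complex" where
  "mmul N A B = (\<lambda>a b. \<Sum>c<N. A a c * B c b)"

definition madj :: "(nat \<Rightarrow> nat \<Rightarrow> complex) \<Rightarrow> nat \<Rightarrow> nat \<Rightarrow> complex" where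
  "madj A = (\<lambda>a b. cnj (A b a))"

definition psimax :: "nat \<Rightarrow> nat \<Rightarrow> nat \<Rightarrow> complex" where
  "psimax d i = (\<lambda>n. complex_of_real (1 / sqrt (real d)) *
                     (\<Sum>j<d. tens (d^2) (ket j) (ket (j + i * d)) n))"

definition FEF :: "nat \<Rightarrow> (nat \<Rightarrow> nat \<Rightarrow> complex) \<Rightarrow> real" where
  "FEF d \<rho> = (GREATEST f. \<exists>V. unitary_on (d^2) V \<and>
     (let N = d^3; W = idtens (d^2) V; M = mmul N (mmul N W \<rho>) (madj W) in
      complex_of_real f = (\<Sum>i<d. \<Sum>a<N. \<Sum>b<N. cnj (psimax d i a) * M a b * psimax d i b)))"

end

theory Submission
  imports Defs "Jordan_Normal_Form.Determinant" "HOL-Analysis.Convex"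
begin

(* For a unitary V the maximised quantity equals (1/d) sum_i sum_r |<u_i, Psi_r>|^2 with
   u_i = (I (x) V^dagger) psi^max_i. Each Psi_r is supported on basis vectors |j>|m> "owned" by r.
   Put s_(+/-) = sqrt (d lambda_(+/-)), L = ((d+1) s_+ + (d-1) s_-)/2, and weight each mu^(+) basis
   vector by y = s_+ L and each mu^(-) one by y = s_- L; then sum |Psi_r|^2 / y = 1 for every r.
   A weighted Cauchy-Schwarz inequality followed by the column normalisation of V bounds the value
   by (1/d^2) sum_m y(m) = L^2/d. The bound is attained by the unitary whose rows are the vectors
   (mu^(+) +/- mu^(-))/sqrt 2 of the pairs {i, j}: it makes every u_i parallel to Psi_i.
   Both closed forms are L^2/d rewritten. *)

lemma digits_eq_iff:
  fixes d p p' q q' :: nat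
  assumes "q < d" "q' < d"
  shows "p * d + q = p' * d + q' \<longleftrightarrow> p = p' \<and> q = q'"
proof
  assume eq: "p * d + q = p' * d + q'"
  have "(p * d + q) div d = (p' * d + q') div d" "(p * d + q) mod d = (p' * d + q') mod d"
    using eq by simp_all
  then show "p = p' \<and> q = q'" using assms by simp
qed simp

lemma digits_less:
  fixes d p p' q q' :: nat
  assumes "q < d" "p < p'"
  shows "p * d + q < p' * d + q'"
proof -
  have "p * d + q < Suc p * d" using assms by simp
  also have "\<dots> \<le> p' * d" using assms by (intro mult_le_mono1) simp
  finally show ?thesis by simp
qed

lemma digits_less_square:
  fixes d p q :: nat
  assumes "p < d" "q < d"
  shows "p * d + q < d^2"
  using digits_less[of q d p d 0] assms by (simp add: power2_eq_square)

lemma power3_eq_mult_power2: "(a::'a::monoid_mult)^3 = a * a^2"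
  by (simp add: power3_eq_cube power2_eq_square mult.assoc)

lemma sum_lessThan_mult:
  fixes h :: "nat \<Rightarrow> 'a::comm_monoid_add"
  shows "(\<Sum>e<A * B. h e) = (\<Sum>i<A. \<Sum>j<B. h (i * B + j))"
proof -
  have "(\<Sum>e<A * B. h e) = (\<Sum>i<A. sum h {i * B..<i * B + B})"
    using sum.nat_group[of h B A] by simp
  also have "\<dots> = (\<Sum>i<A. \<Sum>j<B. h (i * B + j))"
  proof (rule sum.cong[OF refl])
    fix i
    have "sum h {i * B..<i * B + B} = sum h {0 + i * B..<B + i * B}" by (simp add: add.commute)
    also have "\<dots> = (\<Sum>j\<in>{0..<B}. h (j + i * B))" by (rule sum.shift_bounds_nat_ivl)
    finally show "sum h {i * B..<i * B + B} = (\<Sum>j<B. h (i * B + j))"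
      by (simp add: atLeast0LessThan add.commute)
  qed
  finally show ?thesis .
qed

lemma sum_if_eq_else:
  fixes a b :: "'a::ring_1"
  assumes "r < n"
  shows "(\<Sum>j<n. if j = r then a else b) = a + (of_nat n - 1) * b"
proof -
  have "(\<Sum>j<n. if j = r then a else b) = (\<Sum>j<n. (if j = r then a - b else 0) + b)"
    by (rule sum.cong) auto
  also have "\<dots> = a - b + of_nat n * b" using assms by (simp add: sum.distrib)
  finally show ?thesis by (simp add: algebra_simps)
qed

lemma sum_lessThan_if_le:
  fixes p q :: "'a::comm_semiring_1"
  shows "(\<Sum>c<b + k. if b \<le> c then p else q) = of_nat k * p + of_nat b * q"
proof (induct k)
  case 0
  have "(\<Sum>c<b. if b \<le> c then p else q) = (\<Sum>c<b. q)" by (rule sum.cong) auto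
  then show ?case by simp
next
  case (Suc k)
  then show ?case by (simp add: algebra_simps)
qed

lemma sum_of_nat_lessThan: "(\<Sum>b<n. real b) = real n * (real n - 1) / 2"
  by (induct n) (simp_all add: field_simps)

lemma sum_two_points:
  fixes g :: "nat \<Rightarrow> complex"
  assumes "m1 < D" "m2 < D"
  shows "(\<Sum>m<D. g m * (a * (if m = m1 then 1 else 0) + b * (if m = m2 then 1 else 0)))
      = g m1 * a + g m2 * b"
proof -
  have "(\<Sum>m<D. g m * (a * (if m = m1 then 1 else 0) + b * (if m = m2 then 1 else 0)))
     = (\<Sum>m<D. (if m = m1 then g m1 * a else 0) + (if m = m2 then g m2 * b else 0))"
    by (rule sum.cong) (auto simp: algebra_simps)
  then show ?thesis using assms by (simp add: sum.distrib)
qed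

lemma sum_sq_two_points:
  fixes a b :: real and w :: "nat \<Rightarrow> real"
  assumes "m1 < D" "m2 < D" "m1 \<noteq> m2 \<or> b = 0"
  shows "(\<Sum>m<D. (cmod (of_real a * (if m = m1 then 1 else 0) + of_real b * (if m = m2 then 1 else 0)))^2 / w m)
     = a^2 / w m1 + b^2 / w m2"
proof -
  have "(cmod (of_real a * (if m = m1 then 1 else 0) + of_real b * (if m = m2 then 1 else 0)))^2 / w m
      = (if m = m1 then a^2 / w m1 else 0) + (if m = m2 then b^2 / w m2 else 0)" for m
    using assms(3) by auto
  then show ?thesis using assms by (simp add: sum.distrib)
qed

lemma quadratic_form_mmul_madj:
  fixes N :: nat and p :: "nat \<Rightarrow> complex" and W R :: "nat \<Rightarrow> nat \<Rightarrow> complex"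
  defines "u \<equiv> \<lambda>e. \<Sum>b<N. cnj (W b e) * p b"
  shows "(\<Sum>a<N. \<Sum>b<N. cnj (p a) * mmul N (mmul N W R) (madj W) a b * p b)
       = (\<Sum>c<N. \<Sum>e<N. cnj (u c) * R c e * u e)"
proof -
  have right: "(\<Sum>b<N. mmul N (mmul N W R) (madj W) a b * p b) = (\<Sum>e<N. mmul N W R a e * u e)" for a
    unfolding mmul_def[of N "mmul N W R"] madj_def u_def
    by (simp add: sum_distrib_left sum_distrib_right mult.assoc) (rule sum.swap)
  have left: "(\<Sum>a<N. cnj (p a) * mmul N W R a e) = (\<Sum>c<N. cnj (u c) * R c e)" for e
    unfolding mmul_def u_def
    by (simp add: sum_distrib_left sum_distrib_right mult_ac) (rule sum.swap)
  have "(\<Sum>a<N. \<Sum>b<N. cnj (p a) * mmul N (mmul N W R) (madj W) a b * p b)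
     = (\<Sum>a<N. cnj (p a) * (\<Sum>e<N. mmul N W R a e * u e))"
    by (simp add: right[symmetric] sum_distrib_left mult.assoc)
  also have "\<dots> = (\<Sum>e<N. (\<Sum>a<N. cnj (p a) * mmul N W R a e) * u e)"
    by (simp add: sum_distrib_left sum_distrib_right mult.assoc) (rule sum.swap)
  also have "\<dots> = (\<Sum>e<N. \<Sum>c<N. cnj (u c) * R c e * u e)"
    by (simp add: left sum_distrib_right)
  also have "\<dots> = (\<Sum>c<N. \<Sum>e<N. cnj (u c) * R c e * u e)"
    by (rule sum.swap)
  finally show ?thesis .
qed

lemma quadratic_form_mixture:
  fixes u :: "nat \<Rightarrow> complex" and P :: "nat \<Rightarrow> nat \<Rightarrow> complex"
  shows "(\<Sum>c<N. \<Sum>e<N. cnj (u c) * ((1 / of_nat n) * (\<Sum>r<n. P r c * cnj (P r e))) * u e)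
     = of_real ((1 / real n) * (\<Sum>r<n. (cmod (\<Sum>c<N. cnj (u c) * P r c))^2))"
proof -
  define f where "f r c e = (cnj (u c) * P r c) * cnj (cnj (u e) * P r e)" for r c e
  have "(\<Sum>c<N. \<Sum>e<N. cnj (u c) * ((1 / of_nat n) * (\<Sum>r<n. P r c * cnj (P r e))) * u e)
     = (1 / of_nat n) * (\<Sum>c<N. \<Sum>e<N. \<Sum>r<n. f r c e)"
    unfolding f_def by (simp add: sum_distrib_left sum_distrib_right mult_ac)
  also have "(\<Sum>c<N. \<Sum>e<N. \<Sum>r<n. f r c e) = (\<Sum>r<n. \<Sum>c<N. \<Sum>e<N. f r c e)"
    by (subst sum.swap) (rule sum.swap)
  also have "\<dots> = (\<Sum>r<n. (\<Sum>c<N. cnj (u c) * P r c) * cnj (\<Sum>c<N. cnj (u c) * P r c))"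
    unfolding f_def by (simp add: sum_product cnj_sum)
  also have "\<dots> = (\<Sum>r<n. of_real ((cmod (\<Sum>c<N. cnj (u c) * P r c))^2))"
    by (rule sum.cong[OF refl]) (simp only: complex_norm_square)
  finally show ?thesis by simp
qed

lemma unitary_on_column_norm:
  assumes U: "unitary_on D V" and m: "m < D"
  shows "(\<Sum>a<D. (cmod (V a m))^2) = 1"
proof -
  define A :: "complex mat" where "A = mat D D (\<lambda>(a,b). V a b)"
  define B :: "complex mat" where "B = mat D D (\<lambda>(a,b). cnj (V b a))"
  have AD: "A \<in> carrier_mat D D" and BD: "B \<in> carrier_mat D D" unfolding A_def B_def by auto
  have "A * B = 1\<^sub>m D"
  proof (rule eq_matI)
    fix a b assume ab: "a < dim_row (1\<^sub>m D)" "b < dim_col (1\<^sub>m D)"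
    then have "(A * B) $$ (a, b) = (\<Sum>k<D. V a k * cnj (V b k))"
      unfolding A_def B_def by (simp add: scalar_prod_def atLeast0LessThan)
    also have "\<dots> = 1\<^sub>m D $$ (a, b)" using U ab unfolding unitary_on_def by simp
    finally show "(A * B) $$ (a, b) = 1\<^sub>m D $$ (a, b)" .
  qed (auto simp: A_def B_def)
  then have "B * A = 1\<^sub>m D" by (rule mat_mult_left_right_inverse[OF AD BD])
  moreover have "(B * A) $$ (m, m) = (\<Sum>k<D. cnj (V k m) * V k m)"
    using m unfolding A_def B_def by (simp add: scalar_prod_def atLeast0LessThan)
  ultimately have "(\<Sum>k<D. cnj (V k m) * V k m) = 1" using m by simp
  moreover have "(\<Sum>k<D. of_real ((cmod (V k m))^2)) = (\<Sum>k<D. cnj (V k m) * V k m)"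
    by (rule sum.cong[OF refl]) (simp only: complex_norm_square mult.commute)
  ultimately have "(\<Sum>k<D. complex_of_real ((cmod (V k m))^2)) = 1" by simp
  then show ?thesis by (metis of_real_eq_1_iff of_real_sum)
qed

lemma weighted_Cauchy_Schwarz:
  fixes u \<psi> :: "'a \<Rightarrow> complex" and w :: "'a \<Rightarrow> real"
  assumes "finite A" and w_nonneg: "\<And>e. w e \<ge> 0"
    and supp: "\<And>e. e \<in> A \<Longrightarrow> \<psi> e \<noteq> 0 \<Longrightarrow> P e \<and> w e > 0"
  shows "(cmod (\<Sum>e\<in>A. cnj (u e) * \<psi> e))^2
     \<le> (\<Sum>e\<in>{e\<in>A. P e}. w e * (cmod (u e))^2) * (\<Sum>e\<in>A. (cmod (\<psi> e))^2 / w e)"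
proof -
  define f where "f e = (if P e then sqrt (w e) * cmod (u e) else 0)" for e
  define g where "g e = cmod (\<psi> e) / sqrt (w e)" for e
  have fg: "cmod (cnj (u e) * \<psi> e) = f e * g e" if "e \<in> A" for e
    using supp[OF that] by (cases "\<psi> e = 0") (auto simp: f_def g_def norm_mult)
  have "cmod (\<Sum>e\<in>A. cnj (u e) * \<psi> e) \<le> (\<Sum>e\<in>A. f e * g e)"
    using norm_sum[of "\<lambda>e. cnj (u e) * \<psi> e" A] by (simp add: fg)
  then have "(cmod (\<Sum>e\<in>A. cnj (u e) * \<psi> e))^2 \<le> (\<Sum>e\<in>A. f e * g e)^2"
    by (intro power_mono) simp_all
  also have "\<dots> \<le> (\<Sum>e\<in>A. (f e)^2) * (\<Sum>e\<in>A. (g e)^2)"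
    by (rule Cauchy_Schwarz_ineq_sum)
  also have "(\<Sum>e\<in>A. (f e)^2) = (\<Sum>e\<in>{e\<in>A. P e}. w e * (cmod (u e))^2)"
    using \<open>finite A\<close> w_nonneg by (auto simp: sum.inter_filter f_def power_mult_distrib intro!: sum.cong)
  also have "(\<Sum>e\<in>A. (g e)^2) = (\<Sum>e\<in>A. (cmod (\<psi> e))^2 / w e)"
    using w_nonneg by (simp add: g_def power_divide)
  finally show ?thesis .
qed

lemma lam_sqrt_closed_form:
  fixes d :: nat and x :: real
  assumes rd: "real d \<ge> 2" and xl: "-1 \<le> x" and xu: "x \<le> 1"
  shows "(1/4) * ((real d + 1) * sqrt (lam_p d x) + (real d - 1) * sqrt (lam_m d x))^2
    = (1 / (2 * real d)) * (real d + x + sqrt ((real d ^ 2 - 1) * (1 - x^2)))"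
proof -
  have lp_nn: "lam_p d x \<ge> 0" using rd xl by (simp add: lam_p_def)
  have lm_nn: "lam_m d x \<ge> 0" using rd xu by (simp add: lam_m_def)
  have dpos: "real d > 0" using rd by simp
  define a where "a = sqrt (lam_p d x)"
  define b where "b = sqrt (lam_m d x)"
  define s where "s = sqrt ((real d ^ 2 - 1) * (1 - x^2))"
  have a2: "a^2 = lam_p d x" unfolding a_def using lp_nn by simp
  have b2: "b^2 = lam_m d x" unfolding b_def using lm_nn by simp
  have ab_nn: "a * b \<ge> 0" unfolding a_def b_def using lp_nn lm_nn by simp
  have dd: "real d * real d \<ge> 2 * 2" using rd by (intro mult_mono) auto
  have d21: "real d ^ 2 - 1 > 0" using dd by (simp add: power2_eq_square)
  have x2: "1 - x^2 \<ge> 0" using xl xu abs_square_le_1[of x] by simp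
  have s2: "s^2 = (real d ^ 2 - 1) * (1 - x^2)" unfolding s_def using d21 x2 by simp
  have lpm: "lam_p d x * lam_m d x = (1 - x^2) / (real d ^ 2 * (real d ^ 2 - 1))"
    unfolding lam_p_def lam_m_def using rd dd
    by (simp add: divide_simps) (simp add: algebra_simps power2_eq_square)
  have ab: "(real d ^ 2 - 1) * (a * b) = s / real d"
  proof -
    have "((real d ^ 2 - 1) * (a * b))^2 = (real d ^ 2 - 1)^2 * (lam_p d x * lam_m d x)"
      by (simp add: power_mult_distrib a2 b2)
    also have "\<dots> = (real d ^ 2 - 1) * (1 - x^2) / real d ^ 2"
      unfolding lpm using d21 dpos by (simp add: power2_eq_square)
    also have "\<dots> = (s / real d)^2" unfolding power_divide s2 ..
    finally have "((real d ^ 2 - 1) * (a * b))^2 = (s / real d)^2" .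
    moreover have "(real d ^ 2 - 1) * (a * b) \<ge> 0" "s / real d \<ge> 0"
      using ab_nn d21 dpos x2 by (simp_all add: s_def)
    ultimately show ?thesis using power2_eq_iff_nonneg by blast
  qed
  have "((real d + 1) * a + (real d - 1) * b)^2
      = (real d + 1)^2 * a^2 + (real d - 1)^2 * b^2 + 2 * ((real d ^ 2 - 1) * (a * b))"
    by (simp add: power2_eq_square algebra_simps)
  also have "\<dots> = (real d + 1)^2 * lam_p d x + (real d - 1)^2 * lam_m d x + 2 * (s / real d)"
    unfolding a2 b2 ab ..
  also have "(real d + 1)^2 * lam_p d x = (real d + 1) * (1 + x) / real d"
    unfolding lam_p_def using rd by (simp add: power2_eq_square)
  also have "(real d - 1)^2 * lam_m d x = (real d - 1) * (1 - x) / real d"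
    unfolding lam_m_def using rd by (simp add: power2_eq_square)
  also have "(real d + 1) * (1 + x) / real d + (real d - 1) * (1 - x) / real d + 2 * (s / real d)
      = (2 * real d + 2 * x + 2 * s) / real d"
    by (simp add: add_divide_distrib[symmetric] algebra_simps)
  finally show ?thesis unfolding a_def[symmetric] b_def[symmetric] s_def[symmetric] using dpos
    by (simp add: field_simps)
qed

locale werner_complement =
  fixes d :: nat and x :: real
  assumes d_ge_2: "d \<ge> 2" and x_ge: "-1 \<le> x" and x_le: "x \<le> 1"
begin

definition "s_plus = sqrt (real d * lam_p d x)"
definition "s_minus = sqrt (real d * lam_m d x)"
definition "ell = ((real d + 1) * s_plus + (real d - 1) * s_minus) / 2"
definition "c_plus = s_plus / sqrt 2"
definition "c_minus = s_minus / sqrt 2"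

lemma real_d_ge_2: "real d \<ge> 2" using d_ge_2 by simp
lemma d_pos: "d > 0" using d_ge_2 by simp
lemma lam_p_nonneg: "lam_p d x \<ge> 0" using d_ge_2 x_ge by (simp add: lam_p_def)
lemma lam_m_nonneg: "lam_m d x \<ge> 0" using d_ge_2 x_le by (simp add: lam_m_def)
lemma s_plus_nonneg: "s_plus \<ge> 0" unfolding s_plus_def using lam_p_nonneg by simp
lemma s_minus_nonneg: "s_minus \<ge> 0" unfolding s_minus_def using lam_m_nonneg by simp

lemma d_lam_p_le_1: "real d * lam_p d x \<le> 1"
proof -
  have "real d * lam_p d x = (1 + x) / (real d + 1)" using real_d_ge_2 by (simp add: lam_p_def)
  also have "\<dots> \<le> 1" using real_d_ge_2 x_le by (simp add: field_simps)
  finally show ?thesis .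
qed

lemma lam_sum_eq: "lam_p d x + lam_m d x = 2 * (real d - x) / (real d * (real d + 1) * (real d - 1))"
  using real_d_ge_2 unfolding lam_p_def lam_m_def by (simp add: divide_simps) (simp add: algebra_simps)

lemma lam_sum_pos: "lam_p d x + lam_m d x > 0"
  unfolding lam_sum_eq using real_d_ge_2 x_le by simp

lemma one_minus_d_lam_p: "(1 - real d * lam_p d x) / (real d - 1) = real d / 2 * (lam_p d x + lam_m d x)"
  using real_d_ge_2 unfolding lam_p_def lam_m_def by (simp add: divide_simps) (simp add: algebra_simps)

lemma ell_pos: "ell > 0"
proof -
  have "s_plus > 0 \<or> s_minus > 0"
    using lam_sum_pos lam_p_nonneg lam_m_nonneg d_pos s_plus_nonneg s_minus_nonneg
    unfolding s_plus_def s_minus_def by (auto simp: order_le_less)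
  then show ?thesis
    unfolding ell_def using s_plus_nonneg s_minus_nonneg real_d_ge_2
    by (auto intro: add_pos_nonneg add_nonneg_pos)
qed

lemma cos_alpha: "cos (alpha d x) = s_plus"
  unfolding alpha_def s_plus_def using lam_p_nonneg d_lam_p_le_1
  by (intro cos_arccos) (auto intro: order_trans[OF _ real_sqrt_ge_zero])

lemma sin_alpha: "sin (alpha d x) = sqrt (1 - real d * lam_p d x)"
  unfolding alpha_def using lam_p_nonneg d_lam_p_le_1
  by (subst sin_arccos) (auto intro: order_trans[OF _ real_sqrt_ge_zero])

lemma cos_sin_theta:
  defines "t \<equiv> lam_p d x / (lam_p d x + lam_m d x)"
  shows "cos (theta d x) = sqrt t" "sin (theta d x) = sqrt (1 - t)"
proof -
  have t: "0 \<le> t" "t \<le> 1"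
    using lam_p_nonneg lam_m_nonneg lam_sum_pos by (auto simp: t_def field_simps)
  show "cos (theta d x) = sqrt t"
    unfolding theta_def t_def[symmetric] using t
    by (intro cos_arccos) (auto intro: order_trans[OF _ real_sqrt_ge_zero])
  show "sin (theta d x) = sqrt (1 - t)"
    unfolding theta_def t_def[symmetric] using t
    by (subst sin_arccos) (auto intro: order_trans[OF _ real_sqrt_ge_zero])
qed

(* The choice of alpha and theta makes every off-diagonal amplitude of Psi equal to c_plus or c_minus. *)

lemma Psi_coeff_plus: "sin (alpha d x) / sqrt (real d - 1) * cos (theta d x) = c_plus"
proof -
  have "(sin (alpha d x) / sqrt (real d - 1) * cos (theta d x))^2
      = (1 - real d * lam_p d x) / (real d - 1) * (lam_p d x / (lam_p d x + lam_m d x))"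
    unfolding sin_alpha cos_sin_theta using lam_p_nonneg lam_m_nonneg lam_sum_pos d_lam_p_le_1 real_d_ge_2
    by (simp add: power_mult_distrib power_divide)
  also have "\<dots> = c_plus^2"
    unfolding one_minus_d_lam_p c_plus_def s_plus_def using lam_sum_pos lam_p_nonneg d_pos
    by (simp add: power_divide field_simps)
  finally show ?thesis
    using lam_p_nonneg lam_m_nonneg lam_sum_pos d_lam_p_le_1 real_d_ge_2 s_plus_nonneg
    by (subst (asm) power2_eq_iff_nonneg) (auto simp: sin_alpha cos_sin_theta c_plus_def)
qed

lemma Psi_coeff_minus: "sin (alpha d x) / sqrt (real d - 1) * sin (theta d x) = c_minus"
proof -
  have "(sin (alpha d x) / sqrt (real d - 1) * sin (theta d x))^2
      = (1 - real d * lam_p d x) / (real d - 1) * (1 - lam_p d x / (lam_p d x + lam_m d x))"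
    unfolding sin_alpha cos_sin_theta using lam_p_nonneg lam_m_nonneg lam_sum_pos d_lam_p_le_1 real_d_ge_2
    by (simp add: power_mult_distrib power_divide field_simps)
  also have "\<dots> = c_minus^2"
    unfolding one_minus_d_lam_p c_minus_def s_minus_def using lam_sum_pos lam_m_nonneg d_pos
    by (simp add: power_divide field_simps)
  finally show ?thesis
    using lam_p_nonneg lam_m_nonneg lam_sum_pos d_lam_p_le_1 real_d_ge_2 s_minus_nonneg
    by (subst (asm) power2_eq_iff_nonneg) (auto simp: sin_alpha cos_sin_theta c_minus_def field_simps)
qed

definition "coef_jr r j =
  (if j = r then s_plus else if j < r then c_plus else if j < d then - c_minus else 0)"
definition "coef_rj r j =
  (if j < r then c_minus else if r < j \<and> j < d then c_plus else 0)"

lemma Psi_eq: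
  assumes "r < d"
  shows "Psi d x r n =
      of_real (coef_jr r (n div d^2)) * (if n mod d^2 = (n div d^2) * d + r then 1 else 0)
    + of_real (coef_rj r (n div d^2)) * (if n mod d^2 = r * d + n div d^2 then 1 else 0)"
proof -
  define j where "j = n div d^2"
  define m where "m = n mod d^2"
  have lower: "(\<Sum>k<r. tens (d^2) (ket k) (\<lambda>m. ct * mup d k r m + st * mum d k r m) n)
      = (if j < r then ct * (if m = j * d + r then 1 else 0) + st * (if m = r * d + j then 1 else 0) else 0)"
    for ct st
    unfolding tens_def ket_def mup_def mum_def j_def[symmetric] m_def[symmetric]
    by (simp add: if_distrib[where f="\<lambda>a. a * _"] cong: if_cong)
  have upper: "(\<Sum>k\<in>{r<..<d}. tens (d^2) (ket k) (\<lambda>m. ct * mup d r k m - st * mum d r k m) n)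
      = (if r < j \<and> j < d then ct * (if m = r * d + j then 1 else 0) - st * (if m = j * d + r then 1 else 0)
         else 0)" for ct st
    unfolding tens_def ket_def mup_def mum_def j_def[symmetric] m_def[symmetric]
    by (simp add: if_distrib[where f="\<lambda>a. a * _"] cong: if_cong)
  have diag: "tens (d^2) (ket r) (mup d r r) n = (if j = r \<and> m = r * d + r then 1 else 0)"
    unfolding tens_def ket_def mup_def j_def m_def by simp
  have collect: "ca * (if j = r \<and> m = r * d + r then 1 else 0)
     + S * (if j < r then CT * (if m = j * d + r then 1 else 0) + ST * (if m = r * d + j then 1 else 0) else 0)
     + S * (if r < j \<and> j < d then CT * (if m = r * d + j then 1 else 0) - ST * (if m = j * d + r then 1 else 0)
            else 0)
     = of_real (coef_jr r j) * (if m = j * d + r then 1 else 0)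
      + of_real (coef_rj r j) * (if m = r * d + j then 1 else 0)"
    if "S * CT = of_real c_plus" "S * ST = of_real c_minus" "ca = of_real s_plus"
    for S CT ST ca
  proof -
    have "j < d \<Longrightarrow> j \<noteq> r \<Longrightarrow> j * d + r \<noteq> r * d + j" using digits_eq_iff assms by blast
    then show ?thesis using that assms
      by (cases "j < r"; cases "j = r"; cases "j < d"; cases "m = j * d + r"; cases "m = r * d + j")
         (auto simp: coef_jr_def coef_rj_def algebra_simps)
  qed
  show ?thesis
    unfolding Psi_def Let_def lower upper diag j_def[symmetric] m_def[symmetric] cos_alpha
    by (rule collect) (metis Psi_coeff_plus Psi_coeff_minus of_real_mult)+
qed

lemma Psi_component:
  assumes "r < d" "j < d" "m < d^2"
  shows "Psi d x r (j * d^2 + m) = of_real (coef_jr r j) * (if m = j * d + r then 1 else 0)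
      + of_real (coef_rj r j) * (if m = r * d + j then 1 else 0)"
  using assms d_pos unfolding Psi_eq[OF assms(1)] by simp

definition "dual_vec V i e = (\<Sum>b<d^3. cnj (idtens (d^2) V b e) * psimax d i b)"
definition "overlap V i r = (\<Sum>c<d^3. cnj (dual_vec V i c) * Psi d x r c)"
definition "fef_value V = (\<Sum>i<d. (1 / real d) * (\<Sum>r<d. (cmod (overlap V i r))^2))"

lemma FEF_objective_eq:
  "(let N = d^3; W = idtens (d^2) V; M = mmul N (mmul N W (rhoAC d x)) (madj W) in
      (\<Sum>i<d. \<Sum>a<N. \<Sum>b<N. cnj (psimax d i a) * M a b * psimax d i b)) = of_real (fef_value V)"
proof -
  have "(\<Sum>a<d^3. \<Sum>b<d^3. cnj (psimax d i a)
          * mmul (d^3) (mmul (d^3) (idtens (d^2) V) (rhoAC d x)) (madj (idtens (d^2) V)) a b * psimax d i b)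
     = of_real ((1 / real d) * (\<Sum>r<d. (cmod (overlap V i r))^2))" for i
    unfolding quadratic_form_mmul_madj overlap_def dual_vec_def rhoAC_def by (rule quadratic_form_mixture)
  then show ?thesis unfolding Let_def fef_value_def by simp
qed

lemma psimax_eq: "psimax d i b = of_real (1 / sqrt (real d)) *
    (if b div d^2 < d \<and> b mod d^2 = b div d^2 + i * d then 1 else 0)"
  unfolding psimax_def tens_def ket_def
  by (simp add: if_distrib[where f="\<lambda>a. a * _"] cong: if_cong)

lemma dual_vec_eq:
  assumes i: "i < d" and e: "e < d^3"
  shows "dual_vec V i e = of_real (1 / sqrt (real d)) * cnj (V (e div d^2 + i * d) (e mod d^2))"
proof -
  define D where "D = d^2"
  define j where "j = e div D"
  have jd: "j < d" using e unfolding j_def D_def power3_eq_mult_power2 by (simp add: less_mult_imp_div_less)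
  have jid: "j + i * d < D" using digits_less_square[OF i jd] unfolding D_def by (simp add: add.commute)
  define b0 where "b0 = j * D + (j + i * d)"
  have b0_digits: "b0 div D = j" "b0 mod D = j + i * d" unfolding b0_def using jid by auto
  have b0_less: "b0 < d^3"
    using digits_less[OF jid jd, of 0] unfolding b0_def D_def power3_eq_mult_power2 by (simp add: mult.commute)
  have "cnj (idtens D V b e) * psimax d i b =
      (if b = b0 then of_real (1 / sqrt (real d)) * cnj (V (j + i * d) (e mod D)) else 0)" for b
  proof (cases "b = b0")
    case True
    then show ?thesis
      using b0_digits jd unfolding psimax_eq idtens_def D_def[symmetric] j_def[symmetric] by simp
  next
    case False
    have "b div D = j \<Longrightarrow> b mod D = j + i * d \<Longrightarrow> b = b0"
      unfolding b0_def by (metis div_mult_mod_eq mult.commute)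
    then show ?thesis
      using False unfolding psimax_eq idtens_def D_def[symmetric] j_def[symmetric] by auto
  qed
  then show ?thesis
    unfolding dual_vec_def D_def[symmetric] j_def[symmetric] using b0_less by simp
qed

lemma overlap_eq:
  assumes "i < d"
  shows "overlap V i r = of_real (1 / sqrt (real d)) *
     (\<Sum>c<d^3. V (c div d^2 + i * d) (c mod d^2) * Psi d x r c)"
  unfolding overlap_def by (simp add: dual_vec_eq assms sum_distrib_left mult.assoc)

definition "weight m = (if m div d \<le> m mod d then s_plus * ell else s_minus * ell)"

(* For e = j d^2 + m, Psi_r can be nonzero at e only if m = jd + r or m = rd + j; psi_index e is
   that r. *)
definition "psi_index e =
  (if (e mod d^2) div d = e div d^2 then (e mod d^2) mod d else (e mod d^2) div d)"

lemma weight_nonneg: "weight m \<ge> 0"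
  unfolding weight_def using s_plus_nonneg s_minus_nonneg ell_pos by simp

lemma weight_digits:
  "p < d \<Longrightarrow> q < d \<Longrightarrow> weight (p * d + q) = (if p \<le> q then s_plus * ell else s_minus * ell)"
  unfolding weight_def by simp

lemma Psi_nonzero_imp:
  assumes r: "r < d" and nz: "Psi d x r e \<noteq> 0"
  shows "psi_index e = r \<and> weight (e mod d^2) > 0"
proof -
  define j where "j = e div d^2"
  define m where "m = e mod d^2"
  have pos: "0 < s_plus * ell \<longleftrightarrow> s_plus \<noteq> 0" "0 < s_minus * ell \<longleftrightarrow> s_minus \<noteq> 0"
    using s_plus_nonneg s_minus_nonneg ell_pos by (auto simp: zero_less_mult_iff)
  from nz consider (jr) "m = j * d + r" "coef_jr r j \<noteq> 0" | (rj) "m = r * d + j" "coef_rj r j \<noteq> 0"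
    unfolding Psi_eq[OF r] j_def[symmetric] m_def[symmetric]
    by (cases "coef_jr r j = 0") (auto split: if_splits)
  then show ?thesis
  proof cases
    case jr
    then have "j < d" using r by (auto simp: coef_jr_def split: if_splits)
    then show ?thesis
      using jr r pos unfolding psi_index_def weight_def j_def[symmetric] m_def[symmetric]
      by (auto simp: coef_jr_def c_plus_def c_minus_def split: if_splits)
  next
    case rj
    then have "j < d" "j \<noteq> r" using r by (auto simp: coef_rj_def split: if_splits)
    then show ?thesis
      using rj r pos unfolding psi_index_def weight_def j_def[symmetric] m_def[symmetric]
      by (auto simp: coef_rj_def c_plus_def c_minus_def split: if_splits)
  qed
qed

lemma Psi_block_weighted_norm:
  assumes r: "r < d" and j: "j < d"
  shows "(\<Sum>m<d^2. (cmod (Psi d x r (j * d^2 + m)))^2 / weight m)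
       = (if j = r then s_plus / ell else (s_plus + s_minus) / (2 * ell))"
proof -
  have sq_div: "t^2 / (t * ell) = t / ell" "(t / sqrt 2)^2 / (t * ell) = t / (2 * ell)" for t
    using ell_pos by (cases "t = 0"; simp add: power2_eq_square power_divide field_simps)+
  have "(\<Sum>m<d^2. (cmod (Psi d x r (j * d^2 + m)))^2 / weight m)
      = (\<Sum>m<d^2. (cmod (of_real (coef_jr r j) * (if m = j * d + r then 1 else 0)
          + of_real (coef_rj r j) * (if m = r * d + j then 1 else 0)))^2 / weight m)"
    by (rule sum.cong[OF refl]) (simp add: Psi_component r j)
  also have "\<dots> = (coef_jr r j)^2 / weight (j * d + r) + (coef_rj r j)^2 / weight (r * d + j)"
    using r j by (intro sum_sq_two_points) (auto simp: digits_less_square digits_eq_iff coef_rj_def)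
  also have "\<dots> = (if j = r then s_plus / ell else (s_plus + s_minus) / (2 * ell))"
    using r j by (cases "j < r"; cases "j = r")
      (auto simp: coef_jr_def coef_rj_def c_plus_def c_minus_def weight_digits sq_div add_divide_distrib)
  finally show ?thesis .
qed

lemma Psi_weighted_norm:
  assumes r: "r < d"
  shows "(\<Sum>e<d^3. (cmod (Psi d x r e))^2 / weight (e mod d^2)) = 1"
proof -
  have "(\<Sum>e<d^3. (cmod (Psi d x r e))^2 / weight (e mod d^2))
      = (\<Sum>j<d. \<Sum>m<d^2. (cmod (Psi d x r (j * d^2 + m)))^2 / weight ((j * d^2 + m) mod d^2))"
    unfolding power3_eq_mult_power2 by (rule sum_lessThan_mult)
  also have "\<dots> = (\<Sum>j<d. if j = r then s_plus / ell else (s_plus + s_minus) / (2 * ell))"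
    by (intro sum.cong refl) (simp add: Psi_block_weighted_norm r)
  also have "\<dots> = s_plus / ell + (real d - 1) * ((s_plus + s_minus) / (2 * ell))"
    by (rule sum_if_eq_else[OF r])
  also have "\<dots> = 1"
  proof -
    have "2 * s_plus + (real d - 1) * (s_plus + s_minus) = 2 * ell"
      unfolding ell_def by (simp add: algebra_simps)
    then show ?thesis using ell_pos by (simp add: field_simps)
  qed
  finally show ?thesis .
qed

lemma overlap_sq_sum_le:
  assumes i: "i < d"
  shows "(\<Sum>r<d. (cmod (overlap V i r))^2) \<le> (\<Sum>e<d^3. weight (e mod d^2) * (cmod (dual_vec V i e))^2)"
proof -
  define A where "A e = weight (e mod d^2) * (cmod (dual_vec V i e))^2" for e
  have "(cmod (overlap V i r))^2 \<le> (\<Sum>e<d^3. if psi_index e = r then A e else 0)" if r: "r < d" for r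
  proof -
    have "(cmod (overlap V i r))^2
        \<le> (\<Sum>e\<in>{e\<in>{..<d^3}. psi_index e = r}. A e)
          * (\<Sum>e<d^3. (cmod (Psi d x r e))^2 / weight (e mod d^2))"
      unfolding overlap_def A_def
      by (rule weighted_Cauchy_Schwarz) (use Psi_nonzero_imp[OF r] weight_nonneg in auto)
    then show ?thesis by (simp add: Psi_weighted_norm r sum.inter_filter[OF finite_lessThan, symmetric])
  qed
  then have "(\<Sum>r<d. (cmod (overlap V i r))^2) \<le> (\<Sum>r<d. \<Sum>e<d^3. if psi_index e = r then A e else 0)"
    by (intro sum_mono) simp
  also have "\<dots> = (\<Sum>e<d^3. if psi_index e < d then A e else 0)"
    by (subst sum.swap) (simp add: sum.delta)
  also have "\<dots> \<le> (\<Sum>e<d^3. A e)" by (intro sum_mono) (simp add: A_def weight_nonneg)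
  finally show ?thesis unfolding A_def .
qed

lemma weight_sum: "(\<Sum>m<d^2. weight m) = real d * ell^2"
proof -
  have "(\<Sum>m<d^2. weight m) = (\<Sum>b<d. \<Sum>c<d. weight (b * d + c))"
    unfolding power2_eq_square by (rule sum_lessThan_mult)
  also have "\<dots> = (\<Sum>b<d. (real d - real b) * (s_plus * ell) + real b * (s_minus * ell))"
  proof (rule sum.cong[OF refl])
    fix b assume b: "b \<in> {..<d}"
    have "(\<Sum>c<d. weight (b * d + c)) = (\<Sum>c<b + (d - b). if b \<le> c then s_plus * ell else s_minus * ell)"
      using b by (intro sum.cong) (auto simp: weight_def)
    also have "\<dots> = (real d - real b) * (s_plus * ell) + real b * (s_minus * ell)"
      using b by (subst sum_lessThan_if_le) (simp add: of_nat_diff)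
    finally show "(\<Sum>c<d. weight (b * d + c)) = (real d - real b) * (s_plus * ell) + real b * (s_minus * ell)" .
  qed
  also have "\<dots> = (real d * real d - real d * (real d - 1) / 2) * (s_plus * ell)
      + real d * (real d - 1) / 2 * (s_minus * ell)"
    by (simp add: sum.distrib sum_distrib_right[symmetric] sum_subtractf sum_of_nat_lessThan algebra_simps)
  also have "\<dots> = real d * ell^2"
    unfolding ell_def by (simp add: power2_eq_square field_simps)
  finally show ?thesis .
qed

lemma weighted_dual_norm_sum:
  assumes U: "unitary_on (d^2) V"
  shows "(\<Sum>i<d. \<Sum>e<d^3. weight (e mod d^2) * (cmod (dual_vec V i e))^2) = ell^2"
proof -
  define h where "h a m = weight m * (cmod (V a m))^2 / real d" for a m
  have block: "(\<Sum>e<d^3. weight (e mod d^2) * (cmod (dual_vec V i e))^2) = (\<Sum>j<d. \<Sum>m<d^2. h (i * d + j) m)"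
    if i: "i < d" for i
  proof -
    have "(\<Sum>e<d^3. weight (e mod d^2) * (cmod (dual_vec V i e))^2)
        = (\<Sum>j<d. \<Sum>m<d^2. weight ((j * d^2 + m) mod d^2) * (cmod (dual_vec V i (j * d^2 + m)))^2)"
      unfolding power3_eq_mult_power2 by (rule sum_lessThan_mult)
    also have "\<dots> = (\<Sum>j<d. \<Sum>m<d^2. h (i * d + j) m)"
    proof (intro sum.cong refl)
      fix j m assume "j \<in> {..<d}" "m \<in> {..<d^2}"
      then have "j * d^2 + m < d^3" using digits_less[of m "d^2" j d 0] by (simp add: power3_eq_mult_power2 mult.commute)
      then show "weight ((j * d^2 + m) mod d^2) * (cmod (dual_vec V i (j * d^2 + m)))^2 = h (i * d + j) m"
        using \<open>m \<in> {..<d^2}\<close> d_pos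
        by (simp add: dual_vec_eq i h_def norm_mult norm_divide power_mult_distrib power_divide add.commute)
    qed
    finally show ?thesis .
  qed
  have "(\<Sum>i<d. \<Sum>j<d. \<Sum>m<d^2. h (i * d + j) m) = (\<Sum>a<d * d. \<Sum>m<d^2. h a m)"
    by (rule sum_lessThan_mult[symmetric])
  also have "\<dots> = (\<Sum>m<d^2. \<Sum>a<d * d. h a m)"
    by (rule sum.swap)
  also have "\<dots> = (\<Sum>m<d^2. weight m / real d)"
    using unitary_on_column_norm[OF U]
    by (intro sum.cong refl) (simp add: h_def sum_divide_distrib[symmetric] sum_distrib_left[symmetric]
        power2_eq_square)
  also have "\<dots> = ell^2" using weight_sum d_pos by (simp add: sum_divide_distrib[symmetric])
  finally show ?thesis by (simp add: block)
qed

lemma fef_value_le: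
  assumes "unitary_on (d^2) V"
  shows "fef_value V \<le> ell^2 / real d"
proof -
  have "fef_value V = (\<Sum>i<d. \<Sum>r<d. (cmod (overlap V i r))^2) / real d"
    unfolding fef_value_def by (simp add: sum_divide_distrib)
  also have "\<dots> \<le> (\<Sum>i<d. \<Sum>e<d^3. weight (e mod d^2) * (cmod (dual_vec V i e))^2) / real d"
    by (intro divide_right_mono sum_mono overlap_sq_sum_le) simp_all
  finally show ?thesis unfolding weighted_dual_norm_sum[OF assms] .
qed


definition "swap_digits a = (a mod d) * d + a div d"
definition "inv_sqrt2 = complex_of_real (1 / sqrt 2)"

(* Row i d + j mixes the basis vectors i d + j and j d + i, i.e. mu^(+) and mu^(-) of the pair
   {i, j}, with the relative sign that makes it parallel to the component of Psi_i at |j>. *)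
definition "symmetriser a c =
  (if c = a then (if swap_digits a = a then 1 else inv_sqrt2)
   else if c = swap_digits a then (if swap_digits a < a then inv_sqrt2 else - inv_sqrt2) else 0)"

lemma inv_sqrt2_sq: "inv_sqrt2 * cnj inv_sqrt2 = 1/2" "inv_sqrt2 * inv_sqrt2 = 1/2"
  unfolding inv_sqrt2_def by (simp_all flip: of_real_mult)

lemma swap_digits_less: "a < d^2 \<Longrightarrow> swap_digits a < d^2"
  unfolding swap_digits_def using digits_less_square[of "a mod d" d "a div d"] d_pos
  by (simp add: less_mult_imp_div_less power2_eq_square)

lemma swap_digits_swap_digits: "a < d^2 \<Longrightarrow> swap_digits (swap_digits a) = a"
  unfolding swap_digits_def using d_pos by (simp add: less_mult_imp_div_less power2_eq_square)

lemma symmetriser_unitary: "unitary_on (d^2) symmetriser"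
  unfolding unitary_on_def
proof (intro allI impI)
  fix a b assume a: "a < d^2" and b: "b < d^2"
  have "(\<Sum>c<d^2. symmetriser a c * cnj (symmetriser b c))
      = (\<Sum>c\<in>{a, swap_digits a}. symmetriser a c * cnj (symmetriser b c))"
    using a swap_digits_less by (intro sum.mono_neutral_right) (auto simp: symmetriser_def)
  also have "\<dots> = (if a = b then 1 else 0)"
  proof (cases "swap_digits a = a")
    case True
    then have "b \<noteq> a \<Longrightarrow> a \<noteq> swap_digits b" using swap_digits_swap_digits[OF b] by metis
    then show ?thesis using True by (auto simp: symmetriser_def)
  next
    case False
    have ba: "swap_digits (swap_digits a) = a" "swap_digits (swap_digits b) = b"
      using swap_digits_swap_digits a b by auto
    consider "b = a" | "b = swap_digits a" | "b \<noteq> a" "b \<noteq> swap_digits a" by blast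
    then show ?thesis
    proof cases
      case 1
      then show ?thesis using False inv_sqrt2_sq by (simp add: symmetriser_def mult.commute)
    next
      case 2
      then show ?thesis using False ba inv_sqrt2_sq
        by (cases "a < swap_digits a") (auto simp: symmetriser_def)
    next
      case 3
      then have "a \<noteq> swap_digits b" "swap_digits a \<noteq> swap_digits b" using ba by metis+
      then show ?thesis using 3 by (simp add: symmetriser_def)
    qed
  qed
  finally show "(\<Sum>c<d^2. symmetriser a c * cnj (symmetriser b c)) = (if a = b then 1 else 0)" .
qed

lemma symmetriser_digits:
  assumes "i < d" "j < d" "p < d" "q < d"
  shows "symmetriser (j + i * d) (p * d + q) =
    (if p = i \<and> q = j then (if i = j then 1 else inv_sqrt2)
     else if p = j \<and> q = i then (if j < i then inv_sqrt2 else - inv_sqrt2) else 0)"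
proof -
  have swap: "swap_digits (j + i * d) = j * d + i" unfolding swap_digits_def using assms by simp
  have fixed: "j * d + i = j + i * d \<longleftrightarrow> i = j"
    using assms digits_eq_iff[of i d j j i] by (auto simp: add.commute)
  have less: "j * d + i < j + i * d \<longleftrightarrow> j < i"
    using assms digits_less[of i d j i j] digits_less[of j d i j i]
    by (cases i j rule: linorder_cases) (auto simp: add.commute)
  have "p * d + q = j + i * d \<longleftrightarrow> p = i \<and> q = j"
    using assms digits_eq_iff[of q d j p i] by (simp add: add.commute)
  moreover have "p * d + q = j * d + i \<longleftrightarrow> p = j \<and> q = i"
    using assms digits_eq_iff[of q d i p j] by simp
  ultimately show ?thesis unfolding symmetriser_def swap fixed less by auto
qed

lemma symmetriser_Psi_block:
  assumes i: "i < d" and j: "j < d" and r: "r < d"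
  shows "(\<Sum>m<d^2. symmetriser (j + i * d) m * Psi d x r (j * d^2 + m))
       = (if i = r then of_real (if j = r then s_plus else (s_plus + s_minus) / 2) else 0)"
proof -
  have halves: "inv_sqrt2 * of_real c_plus + inv_sqrt2 * of_real c_minus = of_real ((s_plus + s_minus) / 2)"
    "inv_sqrt2 * of_real c_minus + inv_sqrt2 * of_real c_plus = of_real ((s_plus + s_minus) / 2)"
    unfolding inv_sqrt2_def c_plus_def c_minus_def by (simp_all flip: of_real_mult of_real_add add: field_simps)
  have "(\<Sum>m<d^2. symmetriser (j + i * d) m * Psi d x r (j * d^2 + m))
      = (\<Sum>m<d^2. symmetriser (j + i * d) m * (of_real (coef_jr r j) * (if m = j * d + r then 1 else 0)
          + of_real (coef_rj r j) * (if m = r * d + j then 1 else 0)))"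
    by (intro sum.cong refl) (simp add: Psi_component r j)
  also have "\<dots> = symmetriser (j + i * d) (j * d + r) * of_real (coef_jr r j)
      + symmetriser (j + i * d) (r * d + j) * of_real (coef_rj r j)"
    by (rule sum_two_points) (simp_all add: digits_less_square r j)
  also have "\<dots> = (if i = r then of_real (if j = r then s_plus else (s_plus + s_minus) / 2) else 0)"
  proof (cases "i = r")
    case False
    then show ?thesis using i j r by (auto simp: symmetriser_digits)
  next
    case True
    consider "j = r" | "j < r" | "r < j" by linarith
    then show ?thesis
      unfolding symmetriser_digits[OF i j j r] symmetriser_digits[OF i j r j]
      by cases (use True j r in \<open>simp_all add: coef_jr_def coef_rj_def halves\<close>)
  qed
  finally show ?thesis .
qed

lemma overlap_symmetriser:
  assumes i: "i < d" and r: "r < d"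
  shows "overlap symmetriser i r = (if i = r then of_real (ell / sqrt (real d)) else 0)"
proof -
  have "(\<Sum>c<d^3. symmetriser (c div d^2 + i * d) (c mod d^2) * Psi d x r c)
      = (\<Sum>j<d. \<Sum>m<d^2. symmetriser ((j * d^2 + m) div d^2 + i * d) ((j * d^2 + m) mod d^2)
          * Psi d x r (j * d^2 + m))"
    unfolding power3_eq_mult_power2 by (rule sum_lessThan_mult)
  also have "\<dots> = (\<Sum>j<d. if i = r then of_real (if j = r then s_plus else (s_plus + s_minus) / 2) else 0)"
    using d_pos by (intro sum.cong refl) (simp add: symmetriser_Psi_block i r)
  also have "\<dots> = (if i = r then of_real ell else 0)"
  proof -
    have "(\<Sum>j<d. if j = r then s_plus else (s_plus + s_minus) / 2) = ell"
      unfolding sum_if_eq_else[OF r] ell_def by (simp add: field_simps)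
    then show ?thesis by (simp flip: of_real_sum)
  qed
  finally show ?thesis unfolding overlap_eq[OF i] by simp
qed

lemma fef_value_symmetriser: "fef_value symmetriser = ell^2 / real d"
proof -
  have "(\<Sum>r<d. (cmod (overlap symmetriser i r))^2) = ell^2 / real d" if "i < d" for i
    using that ell_pos d_pos
    by (simp add: overlap_symmetriser norm_divide power_divide if_distrib[where f = "\<lambda>z. (cmod z)^2"]
        cong: if_cong)
  then show ?thesis using d_pos unfolding fef_value_def by simp
qed

lemma FEF_rhoAC: "FEF d (rhoAC d x) = ell^2 / real d"
  unfolding FEF_def Let_def FEF_objective_eq[unfolded Let_def]
proof (rule Greatest_equality)
  show "\<exists>V. unitary_on (d^2) V \<and> of_real (ell^2 / real d) = (of_real (fef_value V) :: complex)"
    using symmetriser_unitary fef_value_symmetriser by auto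
next
  fix y assume "\<exists>V. unitary_on (d^2) V \<and> of_real y = (of_real (fef_value V) :: complex)"
  then show "y \<le> ell^2 / real d" using fef_value_le by auto
qed

lemma ell_sq_div_d:
  "ell^2 / real d = (1/4) * ((real d + 1) * sqrt (lam_p d x) + (real d - 1) * sqrt (lam_m d x))^2"
proof -
  define Q where "Q = (real d + 1) * sqrt (lam_p d x) + (real d - 1) * sqrt (lam_m d x)"
  have "ell = sqrt (real d) * (Q / 2)"
    unfolding ell_def s_plus_def s_minus_def Q_def by (simp add: real_sqrt_mult algebra_simps)
  then have "ell^2 = (sqrt (real d))^2 * (Q / 2)^2" by (simp only: power_mult_distrib)
  also have "(sqrt (real d))^2 = real d" by simp
  finally show ?thesis unfolding Q_def[symmetric] using d_pos by (simp add: power_divide)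
qed

end

theorem mainTheorem2:
  fixes d :: nat and x :: real
  assumes "d \<ge> 2" and "-1 \<le> x" and "x \<le> 1"
  shows "FEF d (rhoAC d x) =
           (1/4) * ((real d + 1) * sqrt (lam_p d x) + (real d - 1) * sqrt (lam_m d x))^2
       \<and> FEF d (rhoAC d x) =
           (1 / (2 * real d)) * (real d + x + sqrt ((real d ^ 2 - 1) * (1 - x^2)))"
proof -
  interpret werner_complement d x using assms by unfold_locales
  show ?thesis
    by (simp only: FEF_rhoAC ell_sq_div_d lam_sqrt_closed_form[OF real_d_ge_2 assms(2,3)])
qed

end
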